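(* There is a constant $C>0$ independent of $h$ such that, for $h$ sufficiently small, the solution $u^h$ of the hybrid discrete problem $$F_h(u^h)(x)=0\ \text{for } x\in\Omega^h_0,\qquad u^h=r_h(g)\ \text{on }\partial\Omega^h,$$ lying in $B_\rho(r_h(u))$ with $\rho=C_*h^{2+n/2}$ (the fixed point of $S$), satisfies $|u^h|_{\Omega^h_0}\le C$.
   Context: Setting. Let $n\ge 2$, $\Omega=(0,1)^n$, $f\in C(\overline\Omega)$ with $f>0$, and $g\in C(\partial\Omega)$ admitting a convex extension $\tilde g\in C(\overline\Omega)$. Let $u$ be the unique convex viscosity solution of $\det D^2u=f$ in $\Omega$, $u=g$ on $\partial\Omega$. Let $h>0$ with $1/h\in\mathbb Z$, $\mathbb Z_h=\{x\in\mathbb R^n: x_i/h\in\mathbb Z\ \forall i\}$, $\Omega^h=\overline\Omega\cap\mathbb Z_h$, $\Omega^h_0=\Omega\cap\mathbb Z_h$, $\partial\Omega^h=\Omega^h\setminus\Omega^h_0$. $\mathcal M(\Omega^h)$ is the set of real functions on $\Omega^h$ (mesh functions); $r_h(v)$ is the restriction of a function $v$ to the grid. For $T_h\subset\Omega^h$, $|v^h|_{T_h}=\max_{x\in T_h}|v^h(x)|$. With $e^i$ the unit vectors, $\partial^i_+v^h(x)=(v^h(x+he^i)-v^h(x))/h$, $\partial^i_-v^h(x)=(v^h(x)-v^h(x-he^i))/h$, $D_hv^h=(\partial^i_+v^h)_i$, $\operatorname{div}_h(v^{h,i})_i=\sum_i\partial^i_-v^{h,i}$, and the discrete Hessian $\mathcal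 H_dv^h=(\partial^j_-\partial^i_+v^h)_{i,j}$. Let $\Omega_r\subset\Omega$ be an open bounded convex set such that $u$ is $C^2$ in a neighborhood of every point of $\Omega_r$. Put $\Omega_r^h=\overline{\Omega_r}\cap\mathbb Z_h$, let $\Omega^h_{r,0}$ be the set of $x\in\Omega_r^h$ at which $\mathcal H_dv^h(x)$ is defined using only values at points of $\Omega_r^h$, $\partial\Omega_r^h=\Omega_r^h\setminus\Omega^h_{r,0}$, and $\Omega_s^h=\Omega^h_0\setminus\Omega^h_{r,0}$. Define $M_r[v^h]=\frac1n\operatorname{div}_h[(\operatorname{cof}\operatorname{sym}\mathcal H_dv^h)^TD_hv^h]$, where $\operatorname{sym}A=(A+A^T)/2$ and $\operatorname{cof}A$ is the cofactor matrix. For $x\in\Omega_0^h$ let $W_h(x)$ be the set of orthogonal bases $(\alpha_1,\dots,\alpha_n)$ of $\mathbb R^n$ with $x\pm\alpha_i\in\Omega^h$ for all $i$, and $$M_s^+[v^h](x)=\inf_{(\alpha_1,\dots,\alpha_n)\in W_h(x)}\prod_{i=1}^n\max\Big(\tfrac{v^h(x+\alpha_i)-2v^h(x)+v^h(x-\alpha_i)}{|\alpha_i|^2},0\Big).$$ The hybrid operator is $F_h(v^h)(x)=M_s^+[v^h](x)-f(x)$ for $x\in\Omega_s^h$ and $F_h(v^h)(x)=M_r[v^h](x)-f(x)$ for $x\in\Omega^h_{r,0}$. Let $\Delta_h=\operatorname{div}_hD_h$ and define the linear operator $L_h$ on $\mathcal M(\Omega^h)$ by $L_hv^h(x)=v^h(x)$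 for $x\in\Omega_s^h$ and $L_hv^h(x)=w^h(x)$ for $x\in\Omega^h_{r,0}$, where $w^h$ solves $\Delta_hw^h=v^h$ on $\Omega^h_{r,0}$, $w^h=0$ on $\partial\Omega^h_r$. Let $\alpha=h^{(3+n/2)/(n-1)}$ and for $\nu_1,\nu_2>0$ define $S(\alpha v^h)(x)=\alpha v^h(x)-\nu_x\alpha^nL_hF_h(v^h)(x)$, with $\nu_x=\nu_1$ for $x\in\Omega_s^h$ and $\nu_x=\nu_2$ for $x\in\Omega^h_{r,0}$. The seminorm $|v^h|_{1,h}=\big(h^n\sum_{i=1}^n\sum_{x\in\Omega^h_{r,0}}(\partial^i_+v^h(x))^2\big)^{1/2}$ only involves points of $\Omega^h_{r,0}$. For $\rho>0$, $B_\rho(r_h(u))=\{v^h\in\mathcal M(\Omega^h): |v^h-r_h(u)|_{1,h}\le\rho,\ v^h=r_h(g)\text{ on }\partial\Omega^h,\ v^h=r_h(u)\text{ on }\partial\Omega^h_{r}\}$. For $h$ small, the hybrid discrete problem has a unique solution $u^h$ in $B_\rho(r_h(u))$, $\rho=C_*h^{2+n/2}$ for a fixed constant $C_*$, with $\alpha u^h$ a fixed point of $S$ for suitable $\nu_1,\nu_2$. *)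

theory Defs
  imports "HOL-Analysis.Analysis"
begin

definition Omega :: "(real^'n) set" where
  "Omega = {x. \<forall>i. 0 < x $ i \<and> x $ i < 1}"

definition pderiv :: "'n \<Rightarrow> (real^'n \<Rightarrow> real) \<Rightarrow> real^'n \<Rightarrow> real" where
  "pderiv i \<phi> x = deriv (\<lambda>t. \<phi> (x + t *\<^sub>R axis i 1)) 0"

definition C2_on :: "(real^'n) set \<Rightarrow> (real^'n \<Rightarrow> real) \<Rightarrow> bool" where
  "C2_on S \<phi> \<longleftrightarrow> open S \<and> continuous_on S \<phi>
     \<and> (\<forall>i. \<forall>x\<in>S. (\<lambda>t. \<phi> (x + t *\<^sub>R axis i 1)) differentiable (at 0))
     \<and> (\<forall>i. continuous_on S (pderiv i \<phi>))
     \<and> (\<forall>i j. \<forall>x\<in>S. (\<lambda>t. pderiv i \<phi> (x + t *\<^sub>R axis j 1)) differentiable (at 0))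
     \<and> (\<forall>i j. continuous_on S (pderiv j (pderiv i \<phi>)))"

definition hess :: "(real^'n \<Rightarrow> real) \<Rightarrow> real^'n \<Rightarrow> real^'n^'n" where
  "hess \<phi> x = (\<chi> i j. pderiv j (pderiv i \<phi>) x)"

text \<open>Convex viscosity solution of det D^2 u = f in Omega, u = g on the boundary
  (Gutierrez' definition, with convex C^2 test functions on balls).\<close>
definition MA_viscosity_solution ::
  "(real^'n \<Rightarrow> real) \<Rightarrow> (real^'n \<Rightarrow> real) \<Rightarrow> (real^'n \<Rightarrow> real) \<Rightarrow> bool" where
  "MA_viscosity_solution f g u \<longleftrightarrow>
     continuous_on (closure Omega) u \<and> convex_on Omega u
     \<and> (\<forall>x\<in>frontier Omega. u x = g x)
     \<and> (\<forall>x0\<in>Omega. \<forall>r>0. \<forall>\<phi>. ball x0 r \<subseteq> Omega \<and> C2_on (ball x0 r) \<phi> \<and> convex_on (ball x0 r) \<phi> \<longrightarrow>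
          ((\<forall>y\<in>ball x0 r. u y - \<phi> y \<le> u x0 - \<phi> x0) \<longrightarrow> det (hess \<phi> x0) \<ge> f x0)
        \<and> ((\<forall>y\<in>ball x0 r. u y - \<phi> y \<ge> u x0 - \<phi> x0) \<longrightarrow> det (hess \<phi> x0) \<le> f x0))"

definition grid :: "real \<Rightarrow> (real^'n) set" where
  "grid h = {x. \<forall>i. x $ i / h \<in> \<int>}"

definition Omega_h :: "real \<Rightarrow> (real^'n) set" where
  "Omega_h h = closure Omega \<inter> grid h"

definition Omega_h0 :: "real \<Rightarrow> (real^'n) set" where
  "Omega_h0 h = Omega \<inter> grid h"

definition bdry_h :: "real \<Rightarrow> (real^'n) set" where
  "bdry_h h = Omega_h h - Omega_h0 h"

definition fwd :: "real \<Rightarrow> 'n \<Rightarrow> (real^'n \<Rightarrow> real) \<Rightarrow> real^'n \<Rightarrow> real" where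
  "fwd h i v x = (v (x + h *\<^sub>R axis i 1) - v x) / h"

definition bwd :: "real \<Rightarrow> 'n \<Rightarrow> (real^'n \<Rightarrow> real) \<Rightarrow> real^'n \<Rightarrow> real" where
  "bwd h i v x = (v x - v (x - h *\<^sub>R axis i 1)) / h"

definition Dh :: "real \<Rightarrow> (real^'n \<Rightarrow> real) \<Rightarrow> real^'n \<Rightarrow> real^'n" where
  "Dh h v x = (\<chi> i. fwd h i v x)"

definition divh :: "real \<Rightarrow> (real^'n \<Rightarrow> real^'n) \<Rightarrow> real^'n \<Rightarrow> real" where
  "divh h w x = (\<Sum>i\<in>UNIV. bwd h i (\<lambda>y. w y $ i) x)"

definition Hd :: "real \<Rightarrow> (real^'n \<Rightarrow> real) \<Rightarrow> real^'n \<Rightarrow> real^'n^'n" where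
  "Hd h v x = (\<chi> i j. bwd h j (fwd h i v) x)"

definition Hd_stencil :: "real \<Rightarrow> real^'n \<Rightarrow> (real^'n) set" where
  "Hd_stencil h x = {x} \<union> {x + h *\<^sub>R axis i 1 | i. True} \<union> {x - h *\<^sub>R axis j 1 | j. True}
     \<union> {x + h *\<^sub>R axis i 1 - h *\<^sub>R axis j 1 | i j. True}"

definition msym :: "real^'n^'n \<Rightarrow> real^'n^'n" where
  "msym A = (1/2) *\<^sub>R (A + transpose A)"

text \<open>Cofactor matrix: entry (i,j) is (-1)^(i+j) times the (i,j) minor, which equals
  the determinant of A with its i-th row replaced by the j-th unit vector.\<close>
definition cof :: "real^'n^'n \<Rightarrow> real^'n^'n" where
  "cof A = (\<chi> i j. det (\<chi> k. if k = i then axis j 1 else A $ k))"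

definition Omega_rh :: "(real^'n) set \<Rightarrow> real \<Rightarrow> (real^'n) set" where
  "Omega_rh Or h = closure Or \<inter> grid h"

definition Omega_r0 :: "(real^'n) set \<Rightarrow> real \<Rightarrow> (real^'n) set" where
  "Omega_r0 Or h = {x \<in> Omega_rh Or h. Hd_stencil h x \<subseteq> Omega_rh Or h}"

definition bdry_rh :: "(real^'n) set \<Rightarrow> real \<Rightarrow> (real^'n) set" where
  "bdry_rh Or h = Omega_rh Or h - Omega_r0 Or h"

definition Omega_s :: "(real^'n) set \<Rightarrow> real \<Rightarrow> (real^'n) set" where
  "Omega_s Or h = Omega_h0 h - Omega_r0 Or h"

definition Mr :: "real \<Rightarrow> (real^'n \<Rightarrow> real) \<Rightarrow> real^'n \<Rightarrow> real" where
  "Mr h v x = (1 / real CARD('n)) *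
     divh h (\<lambda>y. transpose (cof (msym (Hd h v y))) *v Dh h v y) x"

definition Wh :: "real \<Rightarrow> real^'n \<Rightarrow> ('n \<Rightarrow> real^'n) set" where
  "Wh h x = {\<alpha>. (\<forall>i. \<alpha> i \<noteq> 0) \<and> (\<forall>i j. i \<noteq> j \<longrightarrow> \<alpha> i \<bullet> \<alpha> j = 0)
              \<and> (\<forall>i. x + \<alpha> i \<in> Omega_h h \<and> x - \<alpha> i \<in> Omega_h h)}"

definition Ms_plus :: "real \<Rightarrow> (real^'n \<Rightarrow> real) \<Rightarrow> real^'n \<Rightarrow> real" where
  "Ms_plus h v x = (INF \<alpha>\<in>Wh h x.
      \<Prod>i\<in>UNIV. max ((v (x + \<alpha> i) - 2 * v x + v (x - \<alpha> i)) / (norm (\<alpha> i))\<^sup>2) 0)"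

definition Fh :: "(real^'n) set \<Rightarrow> (real^'n \<Rightarrow> real) \<Rightarrow> real \<Rightarrow> (real^'n \<Rightarrow> real) \<Rightarrow> real^'n \<Rightarrow> real" where
  "Fh Or f h v x = (if x \<in> Omega_s Or h then Ms_plus h v x - f x else Mr h v x - f x)"

definition seminorm1h :: "(real^'n) set \<Rightarrow> real \<Rightarrow> (real^'n \<Rightarrow> real) \<Rightarrow> real" where
  "seminorm1h Or h v = sqrt (h ^ CARD('n) * (\<Sum>i\<in>UNIV. \<Sum>x\<in>Omega_r0 Or h. (fwd h i v x)\<^sup>2))"

definition Bball :: "(real^'n) set \<Rightarrow> (real^'n \<Rightarrow> real) \<Rightarrow> (real^'n \<Rightarrow> real) \<Rightarrow> real \<Rightarrow> real
                     \<Rightarrow> (real^'n \<Rightarrow> real) set" where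
  "Bball Or g u h \<rho> = {v. seminorm1h Or h (\<lambda>x. v x - u x) \<le> \<rho>
      \<and> (\<forall>x\<in>bdry_h h. v x = g x) \<and> (\<forall>x\<in>bdry_rh Or h. v x = u x)}"

definition solves_hybrid :: "(real^'n) set \<Rightarrow> (real^'n \<Rightarrow> real) \<Rightarrow> (real^'n \<Rightarrow> real) \<Rightarrow> real
                             \<Rightarrow> (real^'n \<Rightarrow> real) \<Rightarrow> bool" where
  "solves_hybrid Or f g h v \<longleftrightarrow> (\<forall>x\<in>Omega_h0 h. Fh Or f h v x = 0) \<and> (\<forall>x\<in>bdry_h h. v x = g x)"

end

theory Submission
  imports Defs
begin

(* The grid Omega^h splits into three parts, and u^h is bounded on each:
   - on the boundary of the cube, u^h = g = u, and u is bounded (continuous on a compact set);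
   - on the regular part Omega^h_{r,0}, u^h - u vanishes on the boundary of Omega^h_r and its
     discrete H^1 seminorm is at most C_* h^(2+n/2); hence every forward difference of u^h - u is
     at most C_* h^3, and walking along a coordinate direction to the boundary of Omega^h_r
     (at most 2/h + 1 steps) gives |u^h - u| <= 3 C_*;
   - on the singular part Omega^h_s the equation M_s^+[u^h] = f > 0 rules out interior extrema:
     a discrete maximum of u^h, or a discrete minimum of u^h - K|x|^2/2 with K^n > max f,
     cannot lie in Omega^h_s, since there M_s^+ would be <= 0, resp. >= K^n.
   The last point is a discrete maximum principle; it transfers the bound from the first two
   parts to all of Omega^h. *)

lemma Omega_box: "Omega = box (0::real^'n) 1"
  unfolding Omega_def interval_cart by simp

lemma closure_Omega: "closure (Omega::(real^'n) set) = cbox 0 1"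
proof -
  have "box (0::real^'n) 1 \<noteq> {}" by (simp add: interval_eq_empty_cart)
  then show ?thesis by (simp add: Omega_box)
qed

lemma mem_closure_Omega: "(x::real^'n) \<in> closure Omega \<longleftrightarrow> (\<forall>i. 0 \<le> x$i \<and> x$i \<le> 1)"
  by (simp add: closure_Omega mem_box_cart)

lemma inner_self_le_card:
  assumes "(x::real^'n) \<in> closure Omega"
  shows "x \<bullet> x \<le> real CARD('n)"
proof -
  have "x $ i * x $ i \<le> 1" for i
    using assms by (simp add: mem_closure_Omega mult_le_one)
  then have "(\<Sum>i\<in>UNIV. x $ i * x $ i) \<le> (\<Sum>i\<in>(UNIV::'n set). 1)"
    by (intro sum_mono) auto
  then show ?thesis by (simp add: inner_vec_def)
qed

lemma finite_Omega_h:
  assumes h: "h > 0"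
  shows "finite (Omega_h h :: (real^'n) set)"
proof -
  let ?A = "PiE (UNIV::'n set) (\<lambda>_. {0..\<lceil>1/h\<rceil>})"
  have "Omega_h h \<subseteq> (\<lambda>k. \<chi> i. h * of_int (k i)) ` ?A"
  proof
    fix x :: "real^'n" assume x: "x \<in> Omega_h h"
    define k where "k = (\<lambda>i. \<lfloor>x$i/h\<rfloor>)"
    have ki: "of_int (k i) = x$i/h" for i
      using x unfolding Omega_h_def grid_def k_def by (auto elim!: Ints_cases)
    have "0 \<le> k i \<and> k i \<le> \<lceil>1/h\<rceil>" for i
    proof -
      have "0 \<le> x$i" "x$i \<le> 1" using x by (auto simp: Omega_h_def mem_closure_Omega)
      then have "0 \<le> x$i/h" "x$i/h \<le> 1/h" using h by (auto simp: divide_right_mono)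
      then show ?thesis unfolding k_def by (smt (verit) ceiling_correct floor_le_ceiling floor_mono
            le_floor_iff of_int_0 zero_le_floor ceiling_mono)
    qed
    then have "k \<in> ?A" by auto
    moreover have "x = (\<chi> i. h * of_int (k i))"
      using h ki by (simp add: vec_eq_iff)
    ultimately show "x \<in> (\<lambda>k. \<chi> i. h * of_int (k i)) ` ?A" by blast
  qed
  moreover have "finite ?A" by (rule finite_PiE) auto
  ultimately show ?thesis using finite_subset by blast
qed

lemma zero_in_Omega_h: "(0::real^'n) \<in> Omega_h h"
  by (simp add: Omega_h_def grid_def mem_closure_Omega)

lemma Omega_r0_subset_Omega_h: "Or \<subseteq> Omega \<Longrightarrow> Omega_r0 Or h \<subseteq> Omega_h h"
  unfolding Omega_r0_def Omega_rh_def Omega_h_def using closure_mono by blast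

lemma grid_neighbours_in_unit_interval:
  fixes a h :: real
  assumes h: "h > 0" and a: "a/h \<in> \<int>" and N: "1/h \<in> \<int>" and a01: "0 < a" "a < 1"
  shows "0 \<le> a - h \<and> a + h \<le> 1"
proof -
  obtain k where "a/h = of_int k" using a by (auto elim: Ints_cases)
  then have ak: "a = h * of_int k" using h by (simp add: field_simps)
  obtain N' where "1/h = of_int N'" using N by (auto elim: Ints_cases)
  then have hN: "1 = h * of_int N'" using h by (simp add: field_simps)
  have "0 < k" using a01(1) ak h by (simp add: zero_less_mult_iff)
  moreover have "k < N'" using a01(2) ak hN h by (metis mult_less_cancel_left_pos of_int_less_iff)
  ultimately have "h * 0 \<le> h * (of_int k - 1)" "h * (of_int k + 1) \<le> h * of_int N'"
    using h by (intro mult_left_mono; simp)+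
  then show ?thesis using ak hN by (simp add: algebra_simps)
qed

lemma axis_basis_in_Wh:
  fixes x :: "real^'n"
  assumes h: "h > 0" and N: "1/h \<in> \<int>" and x: "x \<in> Omega_h0 h"
  shows "(\<lambda>i. h *\<^sub>R axis i (1::real)) \<in> Wh h x"
proof -
  have xO: "\<forall>j. 0 < x$j \<and> x$j < 1" and xg: "\<forall>j. x$j / h \<in> \<int>"
    using x unfolding Omega_h0_def Omega_def grid_def by auto
  have mem: "x + s *\<^sub>R (h *\<^sub>R axis i 1) \<in> Omega_h h" if s: "s = 1 \<or> s = -1" for s i
  proof -
    have "(x + s *\<^sub>R (h *\<^sub>R axis i 1)) $ j / h = x$j/h + s * (if j = i then 1 else 0)" for j
      using h by (simp add: axis_def field_simps)
    then have "(x + s *\<^sub>R (h *\<^sub>R axis i 1)) $ j / h \<in> \<int>" for j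
      using xg s by auto
    moreover have "0 \<le> (x + s *\<^sub>R (h *\<^sub>R axis i 1)) $ j \<and> (x + s *\<^sub>R (h *\<^sub>R axis i 1)) $ j \<le> 1" for j
      using grid_neighbours_in_unit_interval[OF h xg[rule_format, of j] N] xO s h
      by (cases "j = i") (auto simp: axis_def less_imp_le)
    ultimately show ?thesis unfolding Omega_h_def grid_def by (simp add: mem_closure_Omega)
  qed
  have "x + h *\<^sub>R axis i 1 \<in> Omega_h h" "x - h *\<^sub>R axis i 1 \<in> Omega_h h" for i
    using mem[of 1 i] mem[of "-1" i] by simp_all
  moreover have "h *\<^sub>R axis i (1::real) \<noteq> 0" for i using h by (simp add: axis_eq_0_iff)
  moreover have "(h *\<^sub>R axis i (1::real)) \<bullet> (h *\<^sub>R axis j 1) = 0" if "i \<noteq> j" for i j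
    using that by (simp add: inner_axis_axis)
  ultimately show ?thesis unfolding Wh_def by blast
qed

lemma seminorm1h_nonneg: "h > 0 \<Longrightarrow> 0 \<le> seminorm1h Or h d"
  unfolding seminorm1h_def by (intro real_sqrt_ge_zero mult_nonneg_nonneg sum_nonneg) auto

lemma fwd_sq_le_seminorm:
  fixes d :: "real^'n \<Rightarrow> real"
  assumes h: "h > 0" and fin: "finite (Omega_r0 Or h)" and y: "y \<in> Omega_r0 Or h"
  shows "h ^ CARD('n) * (fwd h i d y)\<^sup>2 \<le> (seminorm1h Or h d)\<^sup>2"
proof -
  define S where "S = (\<Sum>i\<in>UNIV. \<Sum>x\<in>Omega_r0 Or h. (fwd h i d x)\<^sup>2)"
  have "(fwd h i d y)\<^sup>2 \<le> (\<Sum>x\<in>Omega_r0 Or h. (fwd h i d x)\<^sup>2)"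
    using fin y by (intro member_le_sum) auto
  also have "\<dots> \<le> S" unfolding S_def
    by (rule member_le_sum) (auto intro: sum_nonneg)
  finally have "h ^ CARD('n) * (fwd h i d y)\<^sup>2 \<le> h ^ CARD('n) * S"
    using h by (intro mult_left_mono) auto
  moreover have "0 \<le> h ^ CARD('n) * S" unfolding S_def
    by (intro mult_nonneg_nonneg sum_nonneg) (use h in auto)
  then have "(seminorm1h Or h d)\<^sup>2 = h ^ CARD('n) * S"
    unfolding seminorm1h_def S_def[symmetric] by simp
  ultimately show ?thesis by simp
qed

lemma increment_bound:
  fixes d :: "real^'n \<Rightarrow> real"
  assumes h: "h > 0" and Cs: "Cstar > 0" and fin: "finite (Omega_r0 Or h)"
    and sn: "seminorm1h Or h d \<le> Cstar * h powr (2 + real CARD('n) / 2)"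
    and y: "y \<in> Omega_r0 Or h"
  shows "\<bar>d (y + h *\<^sub>R axis i 1) - d y\<bar> \<le> Cstar * h^3"
proof -
  let ?n = "CARD('n)"
  have hn: "h ^ ?n > 0" using h by simp
  have "(seminorm1h Or h d)\<^sup>2 \<le> (Cstar * h powr (2 + real ?n / 2))\<^sup>2"
    using sn seminorm1h_nonneg[OF h] by (rule power_mono)
  also have "\<dots> = Cstar\<^sup>2 * (h powr (2 + real ?n / 2))\<^sup>2" by (simp add: power_mult_distrib)
  also have "(h powr (2 + real ?n / 2))\<^sup>2 = h powr (4 + real ?n)"
    using h by (subst powr_power) (auto simp: algebra_simps)
  also have "h powr (4 + real ?n) = h^4 * h^?n"
    using h by (simp only: powr_add powr_realpow powr_numeral less_imp_le)
  also have "Cstar\<^sup>2 * (h^4 * h^?n) = h ^ ?n * (Cstar * h^2)\<^sup>2"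
    by (simp add: power_mult_distrib flip: power_mult)
  finally have "h ^ ?n * (fwd h i d y)\<^sup>2 \<le> h ^ ?n * (Cstar * h^2)\<^sup>2"
    using fwd_sq_le_seminorm[OF h fin y, of i d] by linarith
  then have "\<bar>fwd h i d y\<bar>\<^sup>2 \<le> (Cstar * h^2)\<^sup>2" using hn by simp
  then have "\<bar>fwd h i d y\<bar> \<le> Cstar * h^2"
    by (rule power2_le_imp_le) (use Cs h in simp)
  then have "h * \<bar>fwd h i d y\<bar> \<le> h * (Cstar * h^2)" using h by (intro mult_left_mono) auto
  moreover have "d (y + h *\<^sub>R axis i 1) - d y = h * fwd h i d y" unfolding fwd_def using h by simp
  ultimately show ?thesis using h by (simp add: abs_mult power3_eq_cube power2_eq_square)
qed

lemma walk_bound: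
  fixes d :: "real^'n \<Rightarrow> real"
  assumes step: "\<And>y. y \<in> Omega_r0 Or h \<Longrightarrow> \<bar>d (y + h *\<^sub>R axis i 1) - d y\<bar> \<le> \<delta>"
    and bd: "\<forall>x\<in>bdry_rh Or h. d x = 0" and \<delta>: "\<delta> \<ge> 0"
  shows "y \<in> Omega_rh Or h \<Longrightarrow> y + (real m * h) *\<^sub>R axis i 1 \<notin> Omega_r0 Or h
         \<Longrightarrow> \<bar>d y\<bar> \<le> real m * \<delta>"
proof (induction m arbitrary: y)
  case 0
  then have "y \<in> bdry_rh Or h" unfolding bdry_rh_def by simp
  then show ?case using bd by simp
next
  case (Suc m)
  show ?case
  proof (cases "y \<in> Omega_r0 Or h")
    case False
    then have "y \<in> bdry_rh Or h" using Suc.prems unfolding bdry_rh_def by simp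
    then show ?thesis using bd \<delta> by simp
  next
    case True
    let ?y = "y + h *\<^sub>R axis i 1"
    have "?y \<in> Hd_stencil h y" unfolding Hd_stencil_def by blast
    then have next_in: "?y \<in> Omega_rh Or h" using True unfolding Omega_r0_def by blast
    have "?y + (real m * h) *\<^sub>R axis i 1 = y + (real (Suc m) * h) *\<^sub>R axis i 1"
      by (simp add: algebra_simps scaleR_add_left)
    then have "\<bar>d ?y\<bar> \<le> real m * \<delta>" using Suc.IH[OF next_in] Suc.prems(2) by metis
    moreover have "\<bar>d ?y - d y\<bar> \<le> \<delta>" using step[OF True] .
    ultimately show ?thesis by (simp add: algebra_simps)
  qed
qed

text \<open>From any point of the unit cube, \<open>\<lceil>2/h\<rceil>\<close> steps in
  a coordinate direction leave the cube.\<close>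

lemma regular_part_bound:
  fixes d :: "real^'n \<Rightarrow> real"
  assumes h: "h > 0" "h < 1" and Cs: "Cstar > 0" and sub: "Or \<subseteq> Omega"
    and sn: "seminorm1h Or h d \<le> Cstar * h powr (2 + real CARD('n) / 2)"
    and bd: "\<forall>x\<in>bdry_rh Or h. d x = 0"
    and x: "x \<in> Omega_r0 Or h"
  shows "\<bar>d x\<bar> \<le> 3 * Cstar"
proof -
  obtain i :: 'n where True by simp
  define m where "m = nat \<lceil>2/h\<rceil>"
  have "real m \<ge> 2/h" unfolding m_def by linarith
  then have m_ge: "real m * h \<ge> 2" using h by (simp add: field_simps)
  have "real_of_int \<lceil>2/h\<rceil> < 2/h + 1" by linarith
  moreover have "0 < 2/h" using h by simp
  then have "0 \<le> \<lceil>2/h\<rceil>" using ceiling_mono[of 0 "2/h"] by simp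
  ultimately have m_le: "real m \<le> 2/h + 1" unfolding m_def by simp
  have x_cube: "x \<in> closure Omega" using Omega_r0_subset_Omega_h[OF sub] x by (auto simp: Omega_h_def)
  have "(x + (real m * h) *\<^sub>R axis i 1) $ i > 1"
    using x_cube m_ge by (simp add: mem_closure_Omega) (smt (verit))
  then have "x + (real m * h) *\<^sub>R axis i 1 \<notin> closure Omega"
    unfolding mem_closure_Omega by (meson not_le)
  then have "x + (real m * h) *\<^sub>R axis i 1 \<notin> Omega_r0 Or h"
    using Omega_r0_subset_Omega_h[OF sub, of h] unfolding Omega_h_def by blast
  moreover have fin: "finite (Omega_r0 Or h)"
    using finite_subset[OF Omega_r0_subset_Omega_h[OF sub] finite_Omega_h[OF h(1)]] .
  moreover have "x \<in> Omega_rh Or h" using x unfolding Omega_r0_def by blast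
  ultimately have "\<bar>d x\<bar> \<le> real m * (Cstar * h^3)"
    using walk_bound[OF increment_bound[OF h(1) Cs fin sn] bd] Cs h by simp
  also have "\<dots> \<le> (2/h + 1) * (Cstar * h^3)" using m_le Cs h by (intro mult_right_mono) auto
  also have "\<dots> = Cstar * (2 * h^2 + h^3)" using h by (simp add: field_simps power2_eq_square power3_eq_cube)
  also have "\<dots> \<le> Cstar * 3"
    using h Cs power_le_one[of h 2] power_le_one[of h 3] by (intro mult_left_mono) auto
  finally show ?thesis by simp
qed

lemma Ms_plus_nonpos_at_max:
  fixes v :: "real^'n \<Rightarrow> real"
  assumes \<beta>: "\<beta> \<in> Wh h x" and le: "\<And>i. v (x + \<beta> i) \<le> v x \<and> v (x - \<beta> i) \<le> v x"
  shows "Ms_plus h v x \<le> 0"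
proof -
  let ?P = "\<lambda>\<alpha>. \<Prod>i\<in>UNIV. max ((v (x + \<alpha> i) - 2 * v x + v (x - \<alpha> i)) / (norm (\<alpha> i))\<^sup>2) (0::real)"
  have "bdd_below (?P ` Wh h x)"
    by (rule bdd_belowI[of _ 0]) (auto intro: prod_nonneg)
  then have "Ms_plus h v x \<le> ?P \<beta>" unfolding Ms_plus_def using \<beta> by (rule cINF_lower)
  moreover have "(v (x + \<beta> i) - 2 * v x + v (x - \<beta> i)) / (norm (\<beta> i))\<^sup>2 \<le> 0" for i
    using le[of i] by (intro divide_nonpos_nonneg) auto
  ultimately show ?thesis by (simp add: max_absorb2 zero_power)
qed

lemma Ms_plus_ge_power:
  fixes v :: "real^'n \<Rightarrow> real"
  assumes ne: "Wh h x \<noteq> {}" and K: "K \<ge> 0"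
    and ge: "\<And>\<alpha> i. \<alpha> \<in> Wh h x \<Longrightarrow> K * (norm (\<alpha> i))\<^sup>2 \<le> v (x + \<alpha> i) - 2 * v x + v (x - \<alpha> i)"
  shows "Ms_plus h v x \<ge> K ^ CARD('n)"
  unfolding Ms_plus_def
proof (rule cINF_greatest[OF ne])
  fix \<alpha> assume \<alpha>: "\<alpha> \<in> Wh h x"
  have "K \<le> max ((v (x + \<alpha> i) - 2 * v x + v (x - \<alpha> i)) / (norm (\<alpha> i))\<^sup>2) 0" for i
  proof -
    have "(norm (\<alpha> i))\<^sup>2 > 0" using \<alpha> unfolding Wh_def by auto
    then have "K \<le> (v (x + \<alpha> i) - 2 * v x + v (x - \<alpha> i)) / (norm (\<alpha> i))\<^sup>2"
      using ge[OF \<alpha>, of i] by (simp add: le_divide_eq)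
    then show ?thesis by simp
  qed
  then have "(\<Prod>i\<in>(UNIV::'n set). K)
      \<le> (\<Prod>i\<in>UNIV. max ((v (x + \<alpha> i) - 2 * v x + v (x - \<alpha> i)) / (norm (\<alpha> i))\<^sup>2) 0)"
    using K by (intro prod_mono) auto
  then show "K ^ CARD('n) \<le> (\<Prod>i\<in>UNIV. max ((v (x + \<alpha> i) - 2 * v x + v (x - \<alpha> i)) / (norm (\<alpha> i))\<^sup>2) 0)"
    by simp
qed

lemma quadratic_second_difference:
  fixes x a :: "real^'n"
  shows "K/2 * ((x + a) \<bullet> (x + a)) - 2 * (K/2 * (x \<bullet> x)) + K/2 * ((x - a) \<bullet> (x - a)) = K * (norm a)\<^sup>2"
  by (simp add: inner_add_left inner_add_right inner_diff_left inner_diff_right inner_commute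
      power2_norm_eq_inner algebra_simps)

lemma finite_attains_min:
  fixes \<phi> :: "'a \<Rightarrow> real"
  assumes "finite S" "S \<noteq> {}"
  obtains x where "x \<in> S" "\<And>y. y \<in> S \<Longrightarrow> \<phi> x \<le> \<phi> y"
  using arg_min_if_finite(1)[OF assms] arg_min_least[OF assms] by blast

lemma max_off_singular:
  fixes v :: "real^'n \<Rightarrow> real"
  assumes h: "h > 0" "1/h \<in> \<int>" and pos: "\<forall>y\<in>Omega_s Or h. Ms_plus h v y > 0"
  obtains xM where "xM \<in> Omega_h h" "xM \<notin> Omega_s Or h" "\<And>y. y \<in> Omega_h h \<Longrightarrow> v y \<le> v xM"
proof -
  obtain xM where xM: "xM \<in> Omega_h h" "\<And>y. y \<in> Omega_h h \<Longrightarrow> - v xM \<le> - v y"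
    using finite_attains_min[OF finite_Omega_h[OF h(1)], of "\<lambda>y. - v y"] zero_in_Omega_h by blast
  have "xM \<notin> Omega_s Or h"
  proof
    assume s: "xM \<in> Omega_s Or h"
    then have basis: "(\<lambda>i. h *\<^sub>R axis i (1::real)) \<in> Wh h xM"
      using axis_basis_in_Wh[OF h] unfolding Omega_s_def by blast
    then have "Ms_plus h v xM \<le> 0"
      by (rule Ms_plus_nonpos_at_max) (use basis xM in \<open>auto simp: Wh_def\<close>)
    then show False using pos s by fastforce
  qed
  then show ?thesis using that xM by auto
qed

lemma min_off_singular:
  fixes v :: "real^'n \<Rightarrow> real"
  assumes h: "h > 0" "1/h \<in> \<int>" and K: "K \<ge> 0"
    and small: "\<forall>y\<in>Omega_s Or h. Ms_plus h v y < K ^ CARD('n)"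
  obtains xm where "xm \<in> Omega_h h" "xm \<notin> Omega_s Or h"
    "\<And>y. y \<in> Omega_h h \<Longrightarrow> v xm - K/2 * (xm \<bullet> xm) \<le> v y - K/2 * (y \<bullet> y)"
proof -
  define w where "w = (\<lambda>y::real^'n. K/2 * (y \<bullet> y))"
  obtain xm where xm: "xm \<in> Omega_h h" "\<And>y. y \<in> Omega_h h \<Longrightarrow> v xm - w xm \<le> v y - w y"
    using finite_attains_min[OF finite_Omega_h[OF h(1)], of "\<lambda>y. v y - w y"] zero_in_Omega_h by blast
  have "xm \<notin> Omega_s Or h"
  proof
    assume s: "xm \<in> Omega_s Or h"
    then have "(\<lambda>i. h *\<^sub>R axis i (1::real)) \<in> Wh h xm"
      using axis_basis_in_Wh[OF h] unfolding Omega_s_def by blast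
    then have "Ms_plus h v xm \<ge> K ^ CARD('n)"
    proof (intro Ms_plus_ge_power K)
      fix \<alpha> i assume "\<alpha> \<in> Wh h xm"
      then have "xm + \<alpha> i \<in> Omega_h h" "xm - \<alpha> i \<in> Omega_h h" unfolding Wh_def by auto
      then show "K * (norm (\<alpha> i))\<^sup>2 \<le> v (xm + \<alpha> i) - 2 * v xm + v (xm - \<alpha> i)"
        using xm(2) quadratic_second_difference[of K xm "\<alpha> i"] unfolding w_def
        by (smt (verit))
    qed blast
    then show False using small s by fastforce
  qed
  then show ?thesis using that xm unfolding w_def by auto
qed

lemma singular_equation:
  assumes "solves_hybrid Or f g h uh" and "y \<in> Omega_s Or h"
  shows "Ms_plus h uh y = f y"
  using assms unfolding solves_hybrid_def Fh_def Omega_s_def by auto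

text \<open>Off the singular part, a solution in the ball is bounded by \<open>max |u| + 3 C\<^sub>*\<close>: on the cube
  boundary it equals \<open>g = u\<close>, and on the regular part it is \<open>3 C\<^sub>*\<close>-close to \<open>u\<close>.\<close>

lemma bound_off_singular:
  fixes uh :: "real^'n \<Rightarrow> real"
  assumes h: "h > 0" "h < 1" and Cs: "Cstar > 0" and sub: "Or \<subseteq> Omega"
    and Mu: "\<forall>x\<in>closure Omega. \<bar>u x\<bar> \<le> Mu" and u_bd: "\<forall>x\<in>frontier Omega. u x = g x"
    and sol: "solves_hybrid Or f g h uh"
    and ball: "uh \<in> Bball Or g u h (Cstar * h powr (2 + real CARD('n) / 2))"
    and y: "y \<in> Omega_h h" "y \<notin> Omega_s Or h"
  shows "\<bar>uh y\<bar> \<le> Mu + 3 * Cstar"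
proof -
  have u_y: "\<bar>u y\<bar> \<le> Mu" using Mu y unfolding Omega_h_def by blast
  show ?thesis
  proof (cases "y \<in> Omega_h0 h")
    case False
    then have "y \<in> frontier Omega" "y \<in> bdry_h h"
      using y interior_open[OF open_box] unfolding Omega_h_def Omega_h0_def bdry_h_def frontier_def Omega_box
      by auto
    then have "uh y = u y" using sol u_bd unfolding solves_hybrid_def by auto
    then show ?thesis using u_y Cs by simp
  next
    case True
    then have "y \<in> Omega_r0 Or h" using y unfolding Omega_s_def by blast
    then have "\<bar>uh y - u y\<bar> \<le> 3 * Cstar"
      using ball regular_part_bound[OF h Cs sub, of "\<lambda>x. uh x - u x"] unfolding Bball_def by auto
    then show ?thesis using u_y by linarith
  qed
qed

lemma hybrid_solution_bound:
  fixes uh :: "real^'n \<Rightarrow> real"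
  assumes h: "h > 0" "h < 1" "1/h \<in> \<int>" and Cs: "Cstar > 0" and sub: "Or \<subseteq> Omega"
    and Mu: "\<forall>x\<in>closure Omega. \<bar>u x\<bar> \<le> Mu" and u_bd: "\<forall>x\<in>frontier Omega. u x = g x"
    and K: "K \<ge> 0" and f: "\<forall>x\<in>closure Omega. 0 < f x \<and> f x < K ^ CARD('n)"
    and sol: "solves_hybrid Or f g h uh"
    and ball: "uh \<in> Bball Or g u h (Cstar * h powr (2 + real CARD('n) / 2))"
    and x: "x \<in> Omega_h h"
  shows "\<bar>uh x\<bar> \<le> Mu + 3 * Cstar + K/2 * real CARD('n)"
proof -
  note off_bound = bound_off_singular[OF h(1,2) Cs sub Mu u_bd sol ball]
  have f_on_s: "\<forall>y\<in>Omega_s Or h. 0 < Ms_plus h uh y \<and> Ms_plus h uh y < K ^ CARD('n)"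
    using f singular_equation[OF sol] unfolding Omega_s_def Omega_h0_def
    by (metis Diff_iff Int_iff closure_subset subsetD)
  obtain xM where "xM \<in> Omega_h h" "xM \<notin> Omega_s Or h" "uh x \<le> uh xM"
    using max_off_singular[OF h(1,3)] f_on_s x by metis
  then have upper: "uh x \<le> Mu + 3 * Cstar" using off_bound by fastforce
  obtain xm where xm: "xm \<in> Omega_h h" "xm \<notin> Omega_s Or h"
    and "uh xm - K/2 * (xm \<bullet> xm) \<le> uh x - K/2 * (x \<bullet> x)"
    using min_off_singular[OF h(1,3) K] f_on_s x by (metis less_imp_le)
  moreover have "0 \<le> K/2 * (x \<bullet> x)" "K/2 * (xm \<bullet> xm) \<le> K/2 * real CARD('n)"
    using K inner_self_le_card xm(1) unfolding Omega_h_def by (auto intro: mult_left_mono)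
  ultimately have "- (Mu + 3 * Cstar) - K/2 * real CARD('n) \<le> uh x"
    using off_bound[OF xm(1,2)] by linarith
  moreover have "0 \<le> K/2 * real CARD('n)" using K by simp
  ultimately show ?thesis using upper by (simp add: abs_le_iff)
qed

theorem mainTheorem4:
  fixes f g u :: "real^'n \<Rightarrow> real" and Or :: "(real^'n) set" and Cstar :: real
  assumes n2: "CARD('n) \<ge> 2"
    and f_cont: "continuous_on (closure Omega) f"
    and f_pos: "\<forall>x\<in>closure Omega. f x > 0"
    and g_cont: "continuous_on (frontier Omega) g"
    and g_ext: "\<exists>gt. continuous_on (closure Omega) gt \<and> convex_on (closure Omega) gt
                     \<and> (\<forall>x\<in>frontier Omega. gt x = g x)"
    and u_sol: "MA_viscosity_solution f g u"
    and Or_open: "open Or" and Or_bounded: "bounded Or" and Or_convex: "convex Or"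
    and Or_sub: "Or \<subseteq> Omega"
    and u_C2: "\<forall>x\<in>Or. \<exists>S. x \<in> S \<and> S \<subseteq> Omega \<and> C2_on S u"
    and Cstar_pos: "Cstar > 0"
  shows "\<exists>C>0. \<exists>h0>0. \<forall>h. 0 < h \<and> h < h0 \<and> 1 / h \<in> \<int> \<longrightarrow>
           (\<forall>uh. solves_hybrid Or f g h uh
                 \<and> uh \<in> Bball Or g u h (Cstar * h powr (2 + real CARD('n) / 2)) \<longrightarrow>
                 (\<forall>x\<in>Omega_h0 h. \<bar>uh x\<bar> \<le> C))"
proof -
  have cube: "compact (closure Omega :: (real^'n) set)" by (simp add: closure_Omega)
  have u_cont: "continuous_on (closure Omega) u" and u_bd: "\<forall>x\<in>frontier Omega. u x = g x"
    using u_sol unfolding MA_viscosity_solution_def by blast+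
  obtain Mu where Mu: "Mu > 0" "\<forall>x\<in>closure Omega. \<bar>u x\<bar> \<le> Mu"
    using compact_imp_bounded[OF compact_continuous_image[OF u_cont cube]]
    unfolding bounded_pos by (auto simp: real_norm_def)
  obtain Fm where Fm: "Fm > 0" "\<forall>x\<in>closure Omega. \<bar>f x\<bar> \<le> Fm"
    using compact_imp_bounded[OF compact_continuous_image[OF f_cont cube]]
    unfolding bounded_pos by (auto simp: real_norm_def)
  define K where "K = Fm + 1"
  have "K ^ 1 \<le> K ^ CARD('n)"
    using n2 Fm(1) unfolding K_def by (intro power_increasing) auto
  then have f_K: "\<forall>x\<in>closure Omega. 0 < f x \<and> f x < K ^ CARD('n)"
    using f_pos Fm(2) unfolding K_def by fastforce
  have "\<And>h uh x. 0 < h \<Longrightarrow> h < 1 \<Longrightarrow> 1 / h \<in> \<int> \<Longrightarrow> solves_hybrid Or f g h uh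
      \<Longrightarrow> uh \<in> Bball Or g u h (Cstar * h powr (2 + real CARD('n) / 2)) \<Longrightarrow> x \<in> Omega_h0 h
      \<Longrightarrow> \<bar>uh x\<bar> \<le> Mu + 3 * Cstar + K/2 * real CARD('n)"
    using hybrid_solution_bound[OF _ _ _ Cstar_pos Or_sub Mu(2) u_bd _ f_K] Fm(1)
    unfolding K_def Omega_h0_def Omega_h_def using closure_subset by fastforce
  moreover have "0 < Mu + 3 * Cstar + K/2 * real CARD('n)"
    using Mu(1) Cstar_pos Fm(1) unfolding K_def by (simp add: add_pos_nonneg)
  ultimately show ?thesis by (intro exI[of _ "Mu + 3 * Cstar + K/2 * real CARD('n)"] conjI
        exI[of _ "1::real"]) auto
qed

end
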